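(* Let $\mathbf{A}\in\mathbb{R}^{n_x\times n_x}$, $\mathbf{B}\in\mathbb{R}^{n_x\times n_u}$, $\mathbf{c}\in\mathbb{R}^{n_x}$, and consider the closed-loop discrete-time system $\mathbf{x}_{t+1}=\mathbf{A}\mathbf{x}_t+\mathbf{B}\pi(\mathbf{x}_t)+\mathbf{c}$, where $\pi:\mathbb{R}^{n_x}\to\mathbb{R}^{n_u}$ is an $m$-layer feedforward neural network control policy with $\pi(\mathbf{x})\in\mathcal{U}$ for all $\mathbf{x}$. Let $\mathcal{U}\subseteq\mathbb{R}^{n_u}$ and $\mathcal{X}\subseteq\mathbb{R}^{n_x}$ be convex sets and let $\mathcal{X}_T\subseteq\mathbb{R}^{n_x}$ be a convex target set. Fix a horizon $\tau\geq 1$, let $\mathcal{T}=\{-\tau,\dots,-1\}$, and let $\bar{\mathcal{P}}_t$ ($t\in\mathcal{T}$) be the sets produced by the construction described in the context (with $\bar{\mathcal{P}}_0=\mathcal{X}_T$). Then for every $t\in\mathcal{T}$, $$\mathcal{P}_t(\mathcal{X}_T)\subseteq\bar{\mathcal{P}}_t(\mathcal{X}_T)=\{\mathbf{x}\mid \underline{\mathbf{x}}_t\leq\mathbf{x}\leq\bar{\mathbf{x}}_t\}.$$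
   Context: States are constrained to the operating region $\mathcal{X}$. True backprojection (BP) sets: $\mathcal{P}_0(\mathcal{X}_T)=\mathcal{X}_T$ and, for $t\in\mathcal{T}$, $\mathcal{P}_t(\mathcal{X}_T)=\{\mathbf{x}\in\mathcal{X}\mid \mathbf{A}\mathbf{x}+\mathbf{B}\pi(\mathbf{x})+\mathbf{c}\in\mathcal{P}_{t+1}(\mathcal{X}_T)\}$, i.e. the states from which the closed-loop system (staying in $\mathcal{X}$) reaches $\mathcal{X}_T$ at time $0$. $\mathbf{e}_k$ denotes the $k$-th standard basis vector, inequalities between vectors are componentwise, and an infeasible optimization problem yields the empty set. Construction, recursively for $t=-1,-2,\dots,-\tau$, with $\bar{\mathcal{P}}_0=\mathcal{X}_T$: (1) Backreachable over-approximation: for each $k\in\{1,\dots,n_x\}$ let $\underline{\underline{\mathbf{x}}}_{t;k}$ (resp. $\bar{\bar{\mathbf{x}}}_{t;k}$) be the minimum (resp. maximum) of $\mathbf{e}_k^\top\mathbf{x}_t$ over all $(\mathbf{x}_t,\mathbf{u}_t)$ satisfying $\mathbf{A}\mathbf{x}_t+\mathbf{B}\mathbf{u}_t+\mathbf{c}\in\bar{\mathcal{P}}_{t+1}$, $\mathbf{u}_t\in\mathcal{U}$, $\mathbf{x}_t\in\mathcal{X}$; set $\bar{\mathcal{R}}_t=\{\mathbf{x}\mid\underline{\underline{\mathbf{x}}}_t\le\mathbf{x}\le\bar{\bar{\mathbf{x}}}_t\}$. (2) Relaxation of the network: affine functions $\pi^L_t(\mathbf{x})=\mathbf{\Phi}_t\mathbf{x}+\boldsymbol{\beta}_t$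 and $\pi^U_t(\mathbf{x})=\mathbf{\Psi}_t\mathbf{x}+\boldsymbol{\alpha}_t$ (e.g. obtained by the CROWN relaxation) satisfying $\pi^L_t(\mathbf{x})\le\pi(\mathbf{x})\le\pi^U_t(\mathbf{x})$ for all $\mathbf{x}\in\bar{\mathcal{R}}_t$. (3) BP over-approximation: for each $k$, let $\underline{\mathbf{x}}_{t;k}$ (resp. $\bar{\mathbf{x}}_{t;k}$) be the minimum (resp. maximum) of $\mathbf{e}_k^\top\mathbf{x}_t$ over all variables $\mathbf{x}_t,\dots,\mathbf{x}_{0}$, $\mathbf{u}_t,\dots,\mathbf{u}_{-1}$ satisfying, for every $i\in\{t,\dots,-1\}$: $\mathbf{x}_i\in\bar{\mathcal{R}}_i$, $\pi^L_i(\mathbf{x}_i)\le\mathbf{u}_i\le\pi^U_i(\mathbf{x}_i)$, $\mathbf{x}_{i+1}=\mathbf{A}\mathbf{x}_i+\mathbf{B}\mathbf{u}_i+\mathbf{c}$, and $\mathbf{x}_{i+1}\in\bar{\mathcal{P}}_{i+1}$; set $\bar{\mathcal{P}}_t=\{\mathbf{x}\mid\underline{\mathbf{x}}_t\le\mathbf{x}\le\bar{\mathbf{x}}_t\}$. *)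

theory Defs
  imports "HOL-Analysis.Analysis"
begin

text \<open>Hidden layers are represented as functions nat => real, entries i >= d l being 0.\<close>

fun nn_hidden :: "(real \<Rightarrow> real) \<Rightarrow> (nat \<Rightarrow> nat) \<Rightarrow> (nat \<Rightarrow> real^'n) \<Rightarrow> (nat \<Rightarrow> real)
    \<Rightarrow> (nat \<Rightarrow> nat \<Rightarrow> nat \<Rightarrow> real) \<Rightarrow> (nat \<Rightarrow> nat \<Rightarrow> real) \<Rightarrow> nat \<Rightarrow> real^'n \<Rightarrow> nat \<Rightarrow> real"
  where
  "nn_hidden \<sigma> d W1 b1 W b 0 x = (\<lambda>i. 0)"
| "nn_hidden \<sigma> d W1 b1 W b (Suc 0) x =
     (\<lambda>i. if i < d 1 then \<sigma> (W1 i \<bullet> x + b1 i) else 0)"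
| "nn_hidden \<sigma> d W1 b1 W b (Suc (Suc l)) x =
     (\<lambda>i. if i < d (Suc (Suc l))
          then \<sigma> ((\<Sum>j<d (Suc l). W (Suc (Suc l)) i j * nn_hidden \<sigma> d W1 b1 W b (Suc l) x j)
                  + b (Suc (Suc l)) i)
          else 0)"

definition ffnn :: "(real \<Rightarrow> real) \<Rightarrow> nat \<Rightarrow> (real^'n \<Rightarrow> real^'m) \<Rightarrow> bool" where
  "ffnn \<sigma> m \<pi> \<longleftrightarrow> m \<ge> 1 \<and>
     (if m = 1 then (\<exists>(Wo::real^'n^'m) bo. \<forall>x. \<pi> x = Wo *v x + bo)
      else (\<exists>d W1 b1 W b (Wo :: 'm \<Rightarrow> nat \<Rightarrow> real) (bo :: real^'m). (\<forall>l. d l > 0) \<and>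
              (\<forall>x. \<pi> x = (\<chi> r. (\<Sum>j<d (m - 1). Wo r j * nn_hidden \<sigma> d W1 b1 W b (m - 1) x j)
                                + bo $ r))))"

text \<open>true_BP A B c \<pi> X XT k is P_{-k}(XT): indexed by k = -t >= 0.\<close>
fun true_BP :: "real^'n^'n \<Rightarrow> real^'m^'n \<Rightarrow> real^'n \<Rightarrow> (real^'n \<Rightarrow> real^'m)
    \<Rightarrow> (real^'n) set \<Rightarrow> (real^'n) set \<Rightarrow> nat \<Rightarrow> (real^'n) set" where
  "true_BP A B c \<pi> X XT 0 = XT"
| "true_BP A B c \<pi> X XT (Suc k) =
     {x \<in> X. A *v x + B *v \<pi> x + c \<in> true_BP A B c \<pi> X XT k}"

definition box_of_opt :: "'v set \<Rightarrow> ('v \<Rightarrow> real^'n) \<Rightarrow> real^'n \<Rightarrow> real^'n \<Rightarrow> (real^'n) set \<Rightarrow> bool" where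
  "box_of_opt F f lo hi S \<longleftrightarrow>
     (if F = {} then S = {}
      else (\<forall>i. (\<exists>v\<in>F. f v $ i = lo $ i) \<and> (\<forall>v\<in>F. lo $ i \<le> f v $ i) \<and>
                 (\<exists>v\<in>F. f v $ i = hi $ i) \<and> (\<forall>v\<in>F. f v $ i \<le> hi $ i)) \<and>
           S = {x. lo \<le> x \<and> x \<le> hi})"

text \<open>Step (1): feasible set of (x_t, u_t) for k = -t, given Pbar_{t+1} = Pnext.\<close>
definition backreach_feas :: "real^'n^'n \<Rightarrow> real^'m^'n \<Rightarrow> real^'n \<Rightarrow> (real^'m) set
    \<Rightarrow> (real^'n) set \<Rightarrow> (real^'n) set \<Rightarrow> ((real^'n) \<times> (real^'m)) set" where
  "backreach_feas A B c U X Pnext =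
     {(x, u). A *v x + B *v u + c \<in> Pnext \<and> u \<in> U \<and> x \<in> X}"

text \<open>A pair (xs, us) encodes x_{-j} = xs j (0 \<le> j \<le> k)
and u_{-j} = us j (1 \<le> j \<le> k); other entries are unconstrained and irrelevant.
Rbar j, Pbar j, Phi j, beta j, Psi j, alpha j stand for the objects with time index -j.\<close>
definition bp_feas :: "real^'n^'n \<Rightarrow> real^'m^'n \<Rightarrow> real^'n \<Rightarrow> (nat \<Rightarrow> (real^'n) set)
    \<Rightarrow> (nat \<Rightarrow> (real^'n) set) \<Rightarrow> (nat \<Rightarrow> real^'n^'m) \<Rightarrow> (nat \<Rightarrow> real^'m)
    \<Rightarrow> (nat \<Rightarrow> real^'n^'m) \<Rightarrow> (nat \<Rightarrow> real^'m) \<Rightarrow> nat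
    \<Rightarrow> ((nat \<Rightarrow> (real^'n)) \<times> (nat \<Rightarrow> (real^'m))) set" where
  "bp_feas A B c Rbar Pbar Phi beta Psi alpha k =
     {(xs, us). \<forall>j\<in>{1..k}.
         xs j \<in> Rbar j \<and>
         Phi j *v xs j + beta j \<le> us j \<and> us j \<le> Psi j *v xs j + alpha j \<and>
         xs (j - 1) = A *v xs j + B *v us j + c \<and>
         xs (j - 1) \<in> Pbar (j - 1)}"

end

theory Submission
  imports Defs
begin

text \<open>Started from a state of the true backprojection set, the closed
loop produces a trajectory together with its actual controls. This pair is feasible for the
problem of step (1), since the controls lie in U and, by induction, the next state lies in the
previous over-approximation; hence the state lies in the backreachable box. It is also feasible
for the problem of step (3), since the network is sandwiched by its relaxation on that box.
A feasible point lies between the componentwise optima, so the start state is in the box.\<close>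

definition closed_loop :: "real^'n^'n \<Rightarrow> real^'m^'n \<Rightarrow> real^'n \<Rightarrow> (real^'n \<Rightarrow> real^'m)
    \<Rightarrow> real^'n \<Rightarrow> real^'n" where
  "closed_loop A B c \<pi> x = A *v x + B *v \<pi> x + c"

lemma box_of_opt_mem:
  assumes "box_of_opt F f lo hi S" and "v \<in> F"
  shows "f v \<in> S"
proof -
  from assms(2) have "F \<noteq> {}" by blast
  with assms have "S = {x. lo \<le> x \<and> x \<le> hi}" and "\<forall>i. lo $ i \<le> f v $ i \<and> f v $ i \<le> hi $ i"
    unfolding box_of_opt_def by auto
  then show ?thesis by (simp add: less_eq_vec_def)
qed

lemma true_BP_funpow:
  assumes "x \<in> true_BP A B c \<pi> X XT k" and "i \<le> k"
  shows "(closed_loop A B c \<pi> ^^ i) x \<in> true_BP A B c \<pi> X XT (k - i)"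
  using assms(2)
proof (induction i)
  case 0
  then show ?case using assms(1) by simp
next
  case (Suc i)
  then have "k - i = Suc (k - Suc i)" by simp
  with Suc show ?case by (simp add: closed_loop_def)
qed

lemma true_BP_subset_backreach_box:
  assumes "\<forall>x. \<pi> x \<in> U"
    and "true_BP A B c \<pi> X XT k \<subseteq> Pnext"
    and "box_of_opt (backreach_feas A B c U X Pnext) fst lo hi R"
  shows "true_BP A B c \<pi> X XT (Suc k) \<subseteq> R"
proof
  fix x assume "x \<in> true_BP A B c \<pi> X XT (Suc k)"
  with assms(1,2) have "(x, \<pi> x) \<in> backreach_feas A B c U X Pnext"
    unfolding backreach_feas_def by auto
  from box_of_opt_mem [OF assms(3) this] show "x \<in> R" by simp
qed

lemma true_BP_subset_backreach_boxes:
  assumes "\<forall>x. \<pi> x \<in> U"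
    and "\<forall>j<k. true_BP A B c \<pi> X XT j \<subseteq> Pbar j"
    and "\<forall>j\<in>{1..k}. box_of_opt (backreach_feas A B c U X (Pbar (j - 1))) fst (lo j) (hi j) (Rbar j)"
  shows "\<forall>j\<in>{1..k}. true_BP A B c \<pi> X XT j \<subseteq> Rbar j"
proof
  fix j assume j: "j \<in> {1..k}"
  then obtain i where j_eq: "j = Suc i" and "i < k" by (cases j) auto
  with assms(2) have "true_BP A B c \<pi> X XT i \<subseteq> Pbar i" by blast
  moreover from assms(3) [rule_format, OF j]
  have "box_of_opt (backreach_feas A B c U X (Pbar i)) fst (lo j) (hi j) (Rbar j)"
    by (simp add: j_eq)
  ultimately show "true_BP A B c \<pi> X XT j \<subseteq> Rbar j"
    unfolding j_eq by (rule true_BP_subset_backreach_box [OF assms(1)])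
qed

lemma true_trajectory_bp_feasible:
  assumes x: "x \<in> true_BP A B c \<pi> X XT k"
    and R: "\<forall>j\<in>{1..k}. true_BP A B c \<pi> X XT j \<subseteq> Rbar j"
    and P: "\<forall>j<k. true_BP A B c \<pi> X XT j \<subseteq> Pbar j"
    and relax: "\<forall>j\<in>{1..k}. \<forall>y\<in>Rbar j. Phi j *v y + beta j \<le> \<pi> y \<and> \<pi> y \<le> Psi j *v y + alpha j"
  shows "(\<lambda>j. (closed_loop A B c \<pi> ^^ (k - j)) x, \<lambda>j. \<pi> ((closed_loop A B c \<pi> ^^ (k - j)) x))
           \<in> bp_feas A B c Rbar Pbar Phi beta Psi alpha k"
proof -
  define xs where "xs j = (closed_loop A B c \<pi> ^^ (k - j)) x" for j
  have in_BP: "xs j \<in> true_BP A B c \<pi> X XT j" if "j \<le> k" for j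
    using true_BP_funpow [OF x, of "k - j"] that by (simp add: xs_def)
  have step: "xs (j - 1) = closed_loop A B c \<pi> (xs j)" if "1 \<le> j" "j \<le> k" for j
  proof -
    from that have "k - (j - 1) = Suc (k - j)" by simp
    then show ?thesis by (simp add: xs_def)
  qed
  have "xs j \<in> Rbar j \<and> Phi j *v xs j + beta j \<le> \<pi> (xs j) \<and> \<pi> (xs j) \<le> Psi j *v xs j + alpha j \<and>
        xs (j - 1) = A *v xs j + B *v \<pi> (xs j) + c \<and> xs (j - 1) \<in> Pbar (j - 1)"
    if j: "j \<in> {1..k}" for j
  proof -
    from j have "xs j \<in> true_BP A B c \<pi> X XT j" by (simp add: in_BP)
    with j R have "xs j \<in> Rbar j" by blast
    moreover
    from j have "xs (j - 1) \<in> true_BP A B c \<pi> X XT (j - 1)" and "j - 1 < k"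
      by (auto intro: in_BP)
    with P have "xs (j - 1) \<in> Pbar (j - 1)" by blast
    ultimately show ?thesis
      using j relax step [of j] by (auto simp: closed_loop_def)
  qed
  then show ?thesis unfolding bp_feas_def xs_def [symmetric] by blast
qed

lemma true_BP_subset_bp_box:
  assumes "\<forall>j<k. true_BP A B c \<pi> X XT j \<subseteq> Pbar j"
    and "\<forall>j\<in>{1..k}. true_BP A B c \<pi> X XT j \<subseteq> Rbar j"
    and "\<forall>j\<in>{1..k}. \<forall>y\<in>Rbar j. Phi j *v y + beta j \<le> \<pi> y \<and> \<pi> y \<le> Psi j *v y + alpha j"
    and box: "box_of_opt (bp_feas A B c Rbar Pbar Phi beta Psi alpha k) (\<lambda>(xs, us). xs k) lo hi (Pbar k)"
  shows "true_BP A B c \<pi> X XT k \<subseteq> Pbar k"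
proof
  fix x assume "x \<in> true_BP A B c \<pi> X XT k"
  from box_of_opt_mem [OF box true_trajectory_bp_feasible [OF this assms(2,1,3)]]
  show "x \<in> Pbar k" by simp
qed

theorem lemma4p1:
  fixes A :: "real^'nx^'nx" and B :: "real^'nu^'nx" and c :: "real^'nx"
    and \<sigma> :: "real \<Rightarrow> real" and m :: nat
    and \<pi> :: "real^'nx \<Rightarrow> real^'nu"
    and U :: "(real^'nu) set" and X XT :: "(real^'nx) set"
    and \<tau> :: nat
    and Rbar Pbar :: "nat \<Rightarrow> (real^'nx) set"
    and loR hiR loP hiP :: "nat \<Rightarrow> real^'nx"
    and Phi Psi :: "nat \<Rightarrow> real^'nx^'nu" and beta alpha :: "nat \<Rightarrow> real^'nu"
  assumes nn: "ffnn \<sigma> m \<pi>"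
    and pi_U: "\<forall>x. \<pi> x \<in> U"
    and convU: "convex U" and convX: "convex X" and convXT: "convex XT"
    and tau: "\<tau> \<ge> 1"
    and P0: "Pbar 0 = XT"
    and step1: "\<forall>k\<in>{1..\<tau>}.
       box_of_opt (backreach_feas A B c U X (Pbar (k - 1))) fst (loR k) (hiR k) (Rbar k)"
    and step2: "\<forall>k\<in>{1..\<tau>}. \<forall>x\<in>Rbar k.
       Phi k *v x + beta k \<le> \<pi> x \<and> \<pi> x \<le> Psi k *v x + alpha k"
    and step3: "\<forall>k\<in>{1..\<tau>}.
       box_of_opt (bp_feas A B c Rbar Pbar Phi beta Psi alpha k) (\<lambda>(xs, us). xs k)
         (loP k) (hiP k) (Pbar k)"
  shows "\<forall>k\<in>{1..\<tau>}. true_BP A B c \<pi> X XT k \<subseteq> Pbar k"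
proof -
  have "true_BP A B c \<pi> X XT k \<subseteq> Pbar k" if "k \<le> \<tau>" for k
    using that
  proof (induction k rule: less_induct)
    case (less k)
    show ?case
    proof (cases "k = 0")
      case True
      with P0 show ?thesis by simp
    next
      case False
      from less have P: "\<forall>j<k. true_BP A B c \<pi> X XT j \<subseteq> Pbar j" by simp
      from less.prems step1
      have "\<forall>j\<in>{1..k}. true_BP A B c \<pi> X XT j \<subseteq> Rbar j"
        by (intro true_BP_subset_backreach_boxes [OF pi_U P]) auto
      with P False less.prems step2 step3 show ?thesis
        by (intro true_BP_subset_bp_box) auto
    qed
  qed
  then show ?thesis by auto
qed

end
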